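(* Let $k$ be a field and $d,m$ integers with $d\ge 3$, $m\ge 3d-2$ and $(m-1)!\ne 0$ in $k$. Let $Y\subseteq k$ be a subset of cardinality $d$ such that the set of differences $Y-Y=\{y_1-y_2: y_1,y_2\in Y\}$ has cardinality $1+2\binom d2$. Let $V\subseteq k[\beta]$ be the $k$-subspace containing $(\beta^m)$ with $V/(\beta^m)=\sum_{y\in Y}k\,(e^{y\beta}\bmod\beta^m)$. Then there is no nonzero differential operator $\Theta=A(\beta)+B(\beta)\frac{d}{d\beta}$ with $A,B\in(\beta)$ (i.e. $A(0)=B(0)=0$) and $\deg A,\deg B<m$ such that $\Theta(V)\subseteq V$.
   Context: $k[\beta]$ is the polynomial ring; $e^{y\beta}\bmod\beta^m$ denotes the class of $\sum_{\nu=0}^{m-1}\frac{y^\nu}{\nu!}\beta^\nu$ in $k[\beta]/(\beta^m)$. A differential operator $A+B\frac{d}{d\beta}$ acts on $k[\beta]$ by $v\mapsto Av+Bv'$. *)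

theory Defs
  imports "HOL-Computational_Algebra.Polynomial"
begin

text \<open>Truncated exponential: representative of e^{y beta} mod beta^m,
  i.e. sum over nu < m of (y^nu / nu!) beta^nu.\<close>
definition exp_trunc :: "nat \<Rightarrow> 'a::field \<Rightarrow> 'a poly" where
  "exp_trunc m y = (\<Sum>\<nu><m. monom (y ^ \<nu> / of_nat (fact \<nu>)) \<nu>)"

definition V_space :: "nat \<Rightarrow> 'a::field set \<Rightarrow> 'a poly set" where
  "V_space m Y = {v. \<exists>c :: 'a \<Rightarrow> 'a.
       monom 1 m dvd (v - (\<Sum>y\<in>Y. smult (c y) (exp_trunc m y)))}"

definition diff_op :: "'a::field poly \<Rightarrow> 'a poly \<Rightarrow> 'a poly \<Rightarrow> 'a poly" where
  "diff_op A B v = A * v + B * pderiv v"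

end

(*
  Theta sends e^{y beta} to (A + y B) e^{y beta} modulo beta^m, so invariance of V makes each
  A + y B (y in Y) congruent mod beta^m to a combination of the exponentials e^{(z - y) beta},
  z in Y. For distinct a, b, c in Y the combination (b - c)(A + a B) + (c - a)(A + b B) +
  (a - b)(A + c B) is zero, giving a vanishing combination of exponentials whose exponents z - y
  take at most 1 + 3(d - 1) <= m values; such exponentials are independent mod beta^m
  (Vandermonde). The count of differences makes Y a Sidon set, so each exponent z - a with
  z <> a occurs only once and its coefficient vanishes. Hence A + a B is constant, and it is 0
  since A(0) = B(0) = 0. Doing this at two points of Y gives A = B = 0.
*)

theory Submission
  imports Defs "HOL-Number_Theory.Cong"
begin

lemma of_nat_fact_neq_0_le:
  assumes "(of_nat (fact n) :: 'a::semiring_1) \<noteq> 0" and "k \<le> n"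
  shows "(of_nat (fact k) :: 'a) \<noteq> 0"
proof
  assume k: "(of_nat (fact k) :: 'a) = 0"
  obtain t :: nat where "fact n = fact k * t"
    using fact_dvd[OF \<open>k \<le> n\<close>] by (elim dvdE)
  then have "(of_nat (fact n) :: 'a) = of_nat (fact k) * of_nat t" by simp
  with k assms(1) show False by simp
qed

lemma coeff_exp_trunc:
  "coeff (exp_trunc m y) n = (if n < m then y ^ n / of_nat (fact n) else 0)"
  unfolding exp_trunc_def by (simp add: coeff_sum coeff_monom)

lemma coeff_eq_if_cong_monom_1:
  fixes p q :: "'a::field poly"
  assumes "[p = q] (mod monom 1 m)" and "n < m"
  shows "coeff p n = coeff q n"
  using assms by (simp add: cong_iff_dvd_diff monom_1_dvd_iff')

lemma cong_monom_1_if_coeff_eq: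
  fixes p q :: "'a::field poly"
  assumes "\<And>n. n < m \<Longrightarrow> coeff p n = coeff q n"
  shows "[p = q] (mod monom 1 m)"
  using assms by (simp add: cong_iff_dvd_diff monom_1_dvd_iff')

lemma exp_trunc_0_cong: "[exp_trunc m 0 = 1] (mod monom 1 m)"
  by (rule cong_monom_1_if_coeff_eq) (simp add: coeff_exp_trunc coeff_1)

lemma exp_trunc_mult_cong:
  fixes u w :: "'a::field"
  assumes fact: "(of_nat (fact (m - 1)) :: 'a) \<noteq> 0"
  shows "[exp_trunc m u * exp_trunc m w = exp_trunc m (u + w)] (mod monom 1 m)"
proof (rule cong_monom_1_if_coeff_eq)
  fix n assume n: "n < m"
  have fact_n: "(of_nat (fact n) :: 'a) \<noteq> 0"
    using of_nat_fact_neq_0_le[OF fact] n by simp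
  have "coeff (exp_trunc m u * exp_trunc m w) n =
      (\<Sum>i\<le>n. u ^ i / of_nat (fact i) * (w ^ (n - i) / of_nat (fact (n - i))))"
    using n by (auto simp: coeff_mult coeff_exp_trunc intro!: sum.cong)
  also have "\<dots> = (\<Sum>i\<le>n. of_nat (n choose i) * u ^ i * w ^ (n - i) / of_nat (fact n))"
  proof (rule sum.cong[OF refl])
    fix i assume i: "i \<in> {..n}"
    have "(of_nat (fact i) :: 'a) * of_nat (fact (n - i)) * of_nat (n choose i) = of_nat (fact n)"
      using binomial_fact_lemma[of i n] i by (metis atMost_iff of_nat_mult)
    moreover have "(of_nat (fact i) :: 'a) \<noteq> 0" "(of_nat (fact (n - i)) :: 'a) \<noteq> 0"
      using of_nat_fact_neq_0_le[OF fact_n] i by auto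
    ultimately show "u ^ i / of_nat (fact i) * (w ^ (n - i) / of_nat (fact (n - i))) =
        of_nat (n choose i) * u ^ i * w ^ (n - i) / of_nat (fact n)"
      using fact_n by (simp add: field_simps flip: \<open>_ = of_nat (fact n)\<close>)
  qed
  also have "\<dots> = coeff (exp_trunc m (u + w)) n"
    using n by (simp add: coeff_exp_trunc binomial_ring sum_divide_distrib)
  finally show "coeff (exp_trunc m u * exp_trunc m w) n = coeff (exp_trunc m (u + w)) n" .
qed

lemma pderiv_exp_trunc:
  fixes y :: "'a::field"
  assumes fact: "(of_nat (fact (m - 1)) :: 'a) \<noteq> 0"
  shows "pderiv (exp_trunc m y) = smult y (exp_trunc (m - 1) y)"
proof (rule poly_eqI)
  fix j
  show "coeff (pderiv (exp_trunc m y)) j = coeff (smult y (exp_trunc (m - 1) y)) j"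
  proof (cases "Suc j < m")
    case True
    have fact_Suc_j: "(of_nat (fact (Suc j)) :: 'a) = of_nat (Suc j) * of_nat (fact j)"
      by (metis fact_Suc of_nat_id of_nat_mult)
    have "(of_nat (fact (Suc j)) :: 'a) \<noteq> 0"
      using of_nat_fact_neq_0_le[OF fact, of "Suc j"] True by (simp del: fact_Suc)
    then have "(of_nat (Suc j) :: 'a) \<noteq> 0" "(of_nat (fact j) :: 'a) \<noteq> 0"
      unfolding fact_Suc_j by (auto simp del: of_nat_Suc)
    then have "of_nat (Suc j) * (y ^ Suc j / of_nat (fact (Suc j))) =
        y * (y ^ j / (of_nat (fact j) :: 'a))"
      unfolding fact_Suc_j by (simp add: field_simps del: of_nat_Suc)
    with True show ?thesis
      by (simp add: coeff_pderiv coeff_exp_trunc del: of_nat_Suc fact_Suc)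
  qed (simp add: coeff_pderiv coeff_exp_trunc)
qed

lemma diff_op_exp_trunc_cong:
  fixes A B :: "'a::field poly"
  assumes fact: "(of_nat (fact (m - 1)) :: 'a) \<noteq> 0" and B0: "coeff B 0 = 0"
  shows "[diff_op A B (exp_trunc m y) = (A + smult y B) * exp_trunc m y] (mod monom 1 m)"
proof (cases m)
  case (Suc k)
  have "monom 1 1 dvd B"
    using B0 by (simp add: monom_1_dvd_iff')
  moreover have "monom 1 k dvd smult y (exp_trunc k y - exp_trunc m y)"
    using Suc by (intro dvd_smult) (simp add: monom_1_dvd_iff' coeff_exp_trunc)
  ultimately have "monom 1 1 * monom 1 k dvd B * smult y (exp_trunc k y - exp_trunc m y)"
    by (rule mult_dvd_mono)
  moreover have "diff_op A B (exp_trunc m y) - (A + smult y B) * exp_trunc m y =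
      B * smult y (exp_trunc k y - exp_trunc m y)"
    unfolding diff_op_def pderiv_exp_trunc[OF fact] using Suc
    by (simp add: algebra_simps smult_diff_right)
  ultimately show ?thesis
    using Suc by (simp add: cong_iff_dvd_diff mult_monom)
qed simp

lemma V_space_iff:
  "v \<in> V_space m Y \<longleftrightarrow> (\<exists>c. [v = (\<Sum>y\<in>Y. smult (c y) (exp_trunc m y))] (mod monom 1 m))"
  by (simp add: V_space_def cong_iff_dvd_diff)

lemma exp_trunc_in_V_space:
  assumes "finite Y" and "y \<in> Y"
  shows "exp_trunc m y \<in> V_space m Y"
proof -
  have "(\<Sum>z\<in>Y. smult (if z = y then 1 else 0) (exp_trunc m z)) = exp_trunc m y"
    using assms by (simp add: if_distrib[of "\<lambda>c. smult c _"] sum.delta cong: if_cong)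
  then show ?thesis
    unfolding V_space_iff by (metis cong_refl)
qed

lemma invariant_diff_op_coeff_relation:
  fixes A B :: "'a::field poly"
  assumes fact: "(of_nat (fact (m - 1)) :: 'a) \<noteq> 0" and B0: "coeff B 0 = 0"
    and "finite Y" and "y \<in> Y" and inv: "diff_op A B ` V_space m Y \<subseteq> V_space m Y"
  shows "\<exists>c. \<forall>n<m. of_nat (fact n) * coeff (A + smult y B) n = (\<Sum>z\<in>Y. c z * (z - y) ^ n)"
proof -
  let ?E = "exp_trunc m" and ?P = "A + smult y B"
  have "diff_op A B (?E y) \<in> V_space m Y"
    using inv exp_trunc_in_V_space[OF \<open>finite Y\<close> \<open>y \<in> Y\<close>] by blast
  then obtain c where c: "[diff_op A B (?E y) = (\<Sum>z\<in>Y. smult (c z) (?E z))] (mod monom 1 m)"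
    unfolding V_space_iff by blast
  have "[?P = ?P * ?E (y + - y)] (mod monom 1 m)"
    using cong_scalar_left[OF exp_trunc_0_cong, of ?P] by (simp add: cong_sym)
  also have "[?P * ?E (y + - y) = ?P * ?E y * ?E (- y)] (mod monom 1 m)"
    using cong_scalar_left[OF exp_trunc_mult_cong[OF fact, of y "- y"], of ?P]
    by (simp add: cong_sym mult.assoc)
  also have "[?P * ?E y * ?E (- y) = diff_op A B (?E y) * ?E (- y)] (mod monom 1 m)"
    using diff_op_exp_trunc_cong[OF fact B0] by (simp add: cong_sym cong_scalar_right)
  also have "[diff_op A B (?E y) * ?E (- y) = (\<Sum>z\<in>Y. smult (c z) (?E z)) * ?E (- y)]
      (mod monom 1 m)"
    using c by (rule cong_scalar_right)
  also have "(\<Sum>z\<in>Y. smult (c z) (?E z)) * ?E (- y) = (\<Sum>z\<in>Y. [:c z:] * (?E z * ?E (- y)))"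
    by (simp add: sum_distrib_right)
  also have "[(\<Sum>z\<in>Y. [:c z:] * (?E z * ?E (- y))) = (\<Sum>z\<in>Y. [:c z:] * ?E (z - y))]
      (mod monom 1 m)"
    by (intro cong_sum cong_scalar_left) (metis exp_trunc_mult_cong[OF fact] diff_conv_add_uminus)
  finally have P_cong: "[?P = (\<Sum>z\<in>Y. smult (c z) (?E (z - y)))] (mod monom 1 m)"
    by simp
  have "of_nat (fact n) * coeff ?P n = (\<Sum>z\<in>Y. c z * (z - y) ^ n)" if "n < m" for n
  proof -
    have "(of_nat (fact n) :: 'a) \<noteq> 0"
      using of_nat_fact_neq_0_le[OF fact] \<open>n < m\<close> by simp
    with coeff_eq_if_cong_monom_1[OF P_cong \<open>n < m\<close>] \<open>n < m\<close> show ?thesis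
      by (simp add: coeff_sum coeff_exp_trunc sum_distrib_left field_simps)
  qed
  then show ?thesis
    by blast
qed

definition sidon :: "'a::ab_group_add set \<Rightarrow> bool" where
  "sidon Y \<longleftrightarrow>
    (\<forall>p\<in>Y. \<forall>q\<in>Y. \<forall>r\<in>Y. \<forall>s\<in>Y. p \<noteq> q \<longrightarrow> p - q = r - s \<longrightarrow> p = r \<and> q = s)"

lemma sidonD:
  assumes "sidon Y" and "p \<in> Y" "q \<in> Y" "r \<in> Y" "s \<in> Y" and "p \<noteq> q" and "p - q = r - s"
  shows "p = r \<and> q = s"
  using assms unfolding sidon_def by blast

lemma sidon_if_card_differences:
  fixes Y :: "'a::ab_group_add set"
  assumes "finite Y"
    and card_diffs: "card {y1 - y2 | y1 y2. y1 \<in> Y \<and> y2 \<in> Y} = 1 + 2 * (card Y choose 2)"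
  shows "sidon Y"
proof -
  define S where "S = Y \<times> Y - (\<lambda>y. (y, y)) ` Y"
  define diff where "diff = (\<lambda>(p, q). p - q :: 'a)"
  have "Y \<noteq> {}"
    using card_diffs by auto
  then have diffs: "{y1 - y2 | y1 y2. y1 \<in> Y \<and> y2 \<in> Y} = insert 0 (diff ` S)"
    unfolding S_def diff_def by (auto simp: image_iff)
  have "0 \<notin> diff ` S" "finite S"
    unfolding S_def diff_def using \<open>finite Y\<close> by auto
  then have "card (diff ` S) = 2 * (card Y choose 2)"
    using card_diffs by (simp add: diffs)
  also have "\<dots> = card Y * card Y - card Y"
    by (cases "card Y") (auto simp: choose_two)
  also have "\<dots> = card S"
    unfolding S_def using \<open>finite Y\<close>
    by (subst card_Diff_subset) (auto simp: card_cartesian_product card_image inj_on_def)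
  finally have inj: "inj_on diff S"
    by (rule eq_card_imp_inj_on[OF \<open>finite S\<close>])
  show ?thesis
    unfolding sidon_def
  proof (intro ballI impI)
    fix p q r s
    assume Y: "p \<in> Y" "q \<in> Y" "r \<in> Y" "s \<in> Y" and "p \<noteq> q" and pq_rs: "p - q = r - s"
    then have "r \<noteq> s" by auto
    with Y \<open>p \<noteq> q\<close> have "(p, q) \<in> S" "(r, s) \<in> S"
      unfolding S_def by auto
    then show "p = r \<and> q = s"
      using inj_onD[OF inj, of "(p, q)" "(r, s)"] pq_rs by (simp add: diff_def)
  qed
qed

lemma card_differences_le:
  fixes T Y :: "'a::ab_group_add set"
  assumes "finite Y" and "T \<subseteq> Y"
  shows "card ((\<lambda>(y, z). z - y) ` (T \<times> Y)) \<le> 1 + card T * (card Y - 1)"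
proof -
  have "finite T"
    using assms finite_subset by blast
  have "(\<lambda>(y, z). z - y) ` (T \<times> Y) \<subseteq> insert 0 (\<Union>y\<in>T. (\<lambda>z. z - y) ` (Y - {y}))"
    by auto
  then have "card ((\<lambda>(y, z). z - y) ` (T \<times> Y)) \<le>
      card (insert 0 (\<Union>y\<in>T. (\<lambda>z. z - y) ` (Y - {y})))"
    using \<open>finite T\<close> \<open>finite Y\<close> by (intro card_mono) auto
  also have "\<dots> \<le> 1 + card (\<Union>y\<in>T. (\<lambda>z. z - y) ` (Y - {y}))"
    by (simp add: card_insert_le_m1)
  also have "\<dots> \<le> 1 + (\<Sum>y\<in>T. card ((\<lambda>z. z - y) ` (Y - {y})))"
    using card_UN_le[OF \<open>finite T\<close>] by simp
  also have "\<dots> \<le> 1 + (\<Sum>y\<in>T. card Y - 1)"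
  proof (intro add_left_mono sum_mono)
    fix y assume "y \<in> T"
    then have "card (Y - {y}) = card Y - 1"
      using assms by (simp add: subsetD)
    then show "card ((\<lambda>z. z - y) ` (Y - {y})) \<le> card Y - 1"
      by (metis card_image_le \<open>finite Y\<close> finite_Diff)
  qed
  finally show ?thesis by simp
qed

lemma power_sums_isolated_coeff_eq_0:
  fixes h e :: "'i \<Rightarrow> 'a::field"
  assumes "finite I" and "card (e ` I) \<le> m" and "i0 \<in> I"
    and isolated: "\<And>i. i \<in> I \<Longrightarrow> e i = e i0 \<Longrightarrow> i = i0"
    and power_sums: "\<And>n. n < m \<Longrightarrow> (\<Sum>i\<in>I. h i * e i ^ n) = 0"
  shows "h i0 = 0"
proof -
  define Q where "Q = (\<Prod>w\<in>e ` I - {e i0}. [:- w, 1:])"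
  have "degree Q = card (e ` I - {e i0})"
    unfolding Q_def by (subst degree_prod_eq_sum_degree) auto
  also have "\<dots> < m"
    using card_Diff1_less[of "e ` I" "e i0"] assms(1-3) by simp
  finally have "degree Q < m" .
  have "poly Q (e i) = 0" if "i \<in> I - {i0}" for i
    using that isolated \<open>finite I\<close> by (auto simp: Q_def poly_prod)
  then have isolated_sum: "(\<Sum>i\<in>I. h i * poly Q (e i)) = h i0 * poly Q (e i0)"
    by (simp add: sum.remove[OF \<open>finite I\<close> \<open>i0 \<in> I\<close>])
  have "(\<Sum>i\<in>I. h i * poly Q (e i)) = (\<Sum>k\<le>degree Q. coeff Q k * (\<Sum>i\<in>I. h i * e i ^ k))"
    unfolding poly_altdef by (simp add: sum_distrib_left sum.swap[of _ I] mult_ac)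
  also have "\<dots> = 0"
    using \<open>degree Q < m\<close> power_sums by simp
  finally have "h i0 * poly Q (e i0) = 0"
    by (simp only: isolated_sum)
  moreover have "poly Q (e i0) \<noteq> 0"
    using \<open>finite I\<close> by (simp add: Q_def poly_prod)
  ultimately show ?thesis
    by simp
qed

lemma sidon_relation_off_diagonal_eq_0:
  fixes Y :: "'a::field set" and \<alpha> \<beta> :: "nat \<Rightarrow> 'a" and C :: "'a \<Rightarrow> 'a \<Rightarrow> 'a"
  assumes "finite Y" and "sidon Y" and "3 * card Y \<le> m + 2"
    and "a \<in> Y" "b \<in> Y" "c \<in> Y" and "a \<noteq> b" "b \<noteq> c" "a \<noteq> c"
    and rel: "\<And>y n. y \<in> {a, b, c} \<Longrightarrow> n < m \<Longrightarrow>
      \<alpha> n + y * \<beta> n = (\<Sum>z\<in>Y. C y z * (z - y) ^ n)"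
    and "z0 \<in> Y" "z0 \<noteq> a"
  shows "C a z0 = 0"
proof -
  define T where "T = {a, b, c}"
  \<comment> \<open>the weights annihilate every function affine in y\<close>
  define weight where "weight y = (if y = a then b - c else if y = b then c - a else a - b)" for y
  have "(\<lambda>(y, z). weight y * C y z) (a, z0) = 0"
  proof (rule power_sums_isolated_coeff_eq_0[where e = "\<lambda>(y, z). z - y"])
    show "finite (T \<times> Y)" "(a, z0) \<in> T \<times> Y"
      using assms by (auto simp: T_def)
    have "card ((\<lambda>(y, z). z - y) ` (T \<times> Y)) \<le> 1 + card T * (card Y - 1)"
      using assms by (intro card_differences_le) (auto simp: T_def)
    moreover have "card T = 3" "card Y > 0"
      using assms by (auto simp: T_def card_gt_0_iff)
    ultimately show "card ((\<lambda>(y, z). z - y) ` (T \<times> Y)) \<le> m"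
      using assms(3) by simp
    show "i = (a, z0)"
      if i_mem: "i \<in> T \<times> Y" and i_diff: "(\<lambda>(y, z). z - y) i = (\<lambda>(y, z). z - y) (a, z0)" for i
    proof -
      obtain y z where i: "i = (y, z)" "y \<in> Y" "z \<in> Y"
        using i_mem assms(4-6) by (cases i) (auto simp: T_def)
      then have "z0 - a = z - y"
        using i_diff by simp
      then show ?thesis
        using sidonD[OF \<open>sidon Y\<close> \<open>z0 \<in> Y\<close> \<open>a \<in> Y\<close> i(3,2) \<open>z0 \<noteq> a\<close>] i(1) by simp
    qed
    show "(\<Sum>i\<in>T \<times> Y. (\<lambda>(y, z). weight y * C y z) i * (\<lambda>(y, z). z - y) i ^ n) = 0"
      if "n < m" for n
    proof -
      have "(\<Sum>i\<in>T \<times> Y. (\<lambda>(y, z). weight y * C y z) i * (\<lambda>(y, z). z - y) i ^ n) =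
          (\<Sum>y\<in>T. weight y * (\<Sum>z\<in>Y. C y z * (z - y) ^ n))"
        by (simp add: sum.cartesian_product sum_distrib_left split_def mult.assoc)
      also have "\<dots> = (\<Sum>y\<in>T. weight y * (\<alpha> n + y * \<beta> n))"
        using rel \<open>n < m\<close> by (simp add: T_def)
      also have "\<dots> = (b - c) * (\<alpha> n + a * \<beta> n) + (c - a) * (\<alpha> n + b * \<beta> n)
          + (a - b) * (\<alpha> n + c * \<beta> n)"
        using assms(7-9) by (simp add: T_def weight_def)
      also have "\<dots> = 0"
        by (simp add: algebra_simps)
      finally show ?thesis .
    qed
  qed
  then show ?thesis
    using \<open>b \<noteq> c\<close> by (simp add: weight_def)
qed

lemma sidon_relation_eq_0:
  fixes Y :: "'a::field set" and \<alpha> \<beta> :: "nat \<Rightarrow> 'a" and C :: "'a \<Rightarrow> 'a \<Rightarrow> 'a"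
  assumes "finite Y" and "sidon Y" and "3 * card Y \<le> m + 2"
    and "a \<in> Y" "b \<in> Y" "c \<in> Y" and "a \<noteq> b" "b \<noteq> c" "a \<noteq> c"
    and rel: "\<And>y n. y \<in> {a, b, c} \<Longrightarrow> n < m \<Longrightarrow>
      \<alpha> n + y * \<beta> n = (\<Sum>z\<in>Y. C y z * (z - y) ^ n)"
    and "\<alpha> 0 = 0" "\<beta> 0 = 0" and "n < m"
  shows "\<alpha> n + a * \<beta> n = 0"
proof -
  have "C a z = 0" if "z \<in> Y" "z \<noteq> a" for z
    using sidon_relation_off_diagonal_eq_0[where \<alpha> = \<alpha> and \<beta> = \<beta> and C = C, OF assms(1-10) that]
    .
  then have sum_at_a: "(\<Sum>z\<in>Y. C a z * (z - a) ^ k) = C a a * 0 ^ k" for k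
    by (simp add: sum.remove[OF \<open>finite Y\<close> \<open>a \<in> Y\<close>])
  have "C a a = 0"
    using rel[of a 0] sum_at_a[of 0] assms(11-13) by simp
  then show ?thesis
    using rel[of a n] sum_at_a[of n] \<open>n < m\<close> by simp
qed

lemma invariant_diff_op_affine_eq_0:
  fixes A B :: "'a::field poly"
  assumes fact: "(of_nat (fact (m - 1)) :: 'a) \<noteq> 0"
    and "finite Y" and "sidon Y" and "3 * card Y \<le> m + 2"
    and "a \<in> Y" "b \<in> Y" "c \<in> Y" and "a \<noteq> b" "b \<noteq> c" "a \<noteq> c"
    and "poly A 0 = 0" "poly B 0 = 0" and "degree A < m" "degree B < m"
    and inv: "diff_op A B ` V_space m Y \<subseteq> V_space m Y"
  shows "A + smult a B = 0"
proof -
  have A0: "coeff A 0 = 0" and B0: "coeff B 0 = 0"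
    using assms(11,12) by (simp_all add: poly_0_coeff_0)
  have "\<forall>y\<in>Y. \<exists>c. \<forall>n<m.
      of_nat (fact n) * coeff (A + smult y B) n = (\<Sum>z\<in>Y. c z * (z - y) ^ n)"
    using invariant_diff_op_coeff_relation[OF fact B0 \<open>finite Y\<close> _ inv] by blast
  from bchoice[OF this] obtain C
    where C: "\<forall>y\<in>Y. \<forall>n<m.
      of_nat (fact n) * coeff (A + smult y B) n = (\<Sum>z\<in>Y. C y z * (z - y) ^ n)"
    by blast
  then have rel: "of_nat (fact n) * coeff A n + y * (of_nat (fact n) * coeff B n) =
      (\<Sum>z\<in>Y. C y z * (z - y) ^ n)" if "y \<in> Y" and "n < m" for y n
    using that by (simp add: distrib_left mult.left_commute)
  have "coeff (A + smult a B) n = 0" for n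
  proof (cases "n < m")
    case True
    have "of_nat (fact n) * coeff A n + a * (of_nat (fact n) * coeff B n) = 0"
      by (rule sidon_relation_eq_0[where \<alpha> = "\<lambda>n. of_nat (fact n) * coeff A n"
          and \<beta> = "\<lambda>n. of_nat (fact n) * coeff B n" and C = C, OF assms(2-10)])
        (use rel A0 B0 True assms(5-7) in auto)
    moreover have "(of_nat (fact n) :: 'a) \<noteq> 0"
      using of_nat_fact_neq_0_le[OF fact] True by simp
    ultimately show ?thesis
      by (simp, metis distrib_left mult.left_commute mult_eq_0_iff)
  next
    case False
    then show ?thesis
      using assms(13,14) by (simp add: coeff_eq_0)
  qed
  then show ?thesis
    by (simp add: poly_eqI)
qed

theorem mainTheorem13:
  fixes Y :: "'a::field set" and d m :: nat
  assumes "d \<ge> 3" and "m \<ge> 3 * d - 2"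
    and "(of_nat (fact (m - 1)) :: 'a) \<noteq> 0"
    and "finite Y" and "card Y = d"
    and "card {y1 - y2 | y1 y2. y1 \<in> Y \<and> y2 \<in> Y} = 1 + 2 * (d choose 2)"
  shows "\<not> (\<exists>A B :: 'a poly.
             (A \<noteq> 0 \<or> B \<noteq> 0) \<and>
             poly A 0 = 0 \<and> poly B 0 = 0 \<and>
             degree A < m \<and> degree B < m \<and>
             diff_op A B ` V_space m Y \<subseteq> V_space m Y)"
proof -
  obtain T where "T \<subseteq> Y" "card T = 3"
    using obtain_subset_with_card_n[of 3 Y] assms(1,5) by blast
  then obtain a b c where abc: "a \<in> Y" "b \<in> Y" "c \<in> Y" "a \<noteq> b" "b \<noteq> c" "a \<noteq> c"
    by (auto simp: card_3_iff)
  have sidon: "sidon Y"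
    using sidon_if_card_differences assms(4-6) by blast
  have card_bound: "3 * card Y \<le> m + 2"
    using assms(1,2,5) by linarith
  have "A = 0 \<and> B = 0"
    if "poly A 0 = 0" "poly B 0 = 0" "degree A < m" "degree B < m"
      "diff_op A B ` V_space m Y \<subseteq> V_space m Y" for A B :: "'a poly"
  proof -
    have "A + smult a B = 0"
      using invariant_diff_op_affine_eq_0[OF assms(3,4) sidon card_bound abc that] .
    moreover have "A + smult b B = 0"
      using invariant_diff_op_affine_eq_0[OF assms(3,4) sidon card_bound abc(2,3,1)
          abc(5) abc(6)[symmetric] abc(4)[symmetric] that] .
    ultimately have "smult (a - b) B = 0"
      by (metis add_diff_cancel_left smult_diff_left diff_self)
    then have "B = 0"
      using \<open>a \<noteq> b\<close> by simp
    with \<open>A + smult a B = 0\<close> show ?thesis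
      by simp
  qed
  then show ?thesis
    by blast
qed

end
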